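(* Let $N=2^\ell$ ($\ell$ a positive integer), $\omega=e^{2\pi\mathbf{i}/N}$, $C_2\subseteq C_1\subseteq\mathbb{F}_2^n$ linear codes, $y_x,y_z\in\mathbb{F}_2^n$, $Q=Q(C_1,C_2,y_x,y_z)$ and $Q'=Q(C_1,C_2,0,0)$. Let $b\in\mathbb{Z}_N^n$ with $U(b)Q=Q$, and let $U'=\omega^{y_z\cdot b}U(b_{y_z})$, where $(b_{y_z})_i=b_i$ if $(y_z)_i=0$ and $(b_{y_z})_i=-b_i$ if $(y_z)_i=1$. Fix an encoding $\{w_1,\ldots,w_K\}$, used for both $Q$ and $Q'$. Then: (1) the logical action of $U(b)$ on $Q$ equals the logical action of $U'$ on $Q'$; (2) if the logical action of $U(b)$ on $Q$ is transversal, then the logical action of $U'$ on $Q'$ is transversal; (3) if $U(b)$ acts as the identity on $Q$, then $U'$ acts as the identity on $Q'$.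
   Context: Vectors of $\mathbb{F}_2^n$ are lifted to $\{0,1\}^n$ and $b\cdot x=\sum_ib_ix_i\bmod N$. $U(a)=\mathrm{diag}(1,\omega^a)$ for $a\in\mathbb{Z}_N$ and $U(b)=\bigotimes_iU(b_i)$. The CSS code $Q(C_1,C_2,y_x,y_z)$ is the subspace of $(\mathbb{C}^2)^{\otimes n}$ stabilized by all $(-1)^{y_x\cdot u+y_z\cdot v}X(u)Z(v)$, $u\in C_2$, $v\in C_1^\perp$ ($X(u)=\bigotimes X^{u_i}$, $Z(v)=\bigotimes Z^{v_i}$). An encoding is a set $\{w_1,\ldots,w_K\}\subseteq C_1$ whose classes form a basis of $C_1/C_2$; the logical states of $Q(C_1,C_2,y_x,y_z)$ are $|v\rangle_L=|C_2|^{-1/2}\sum_{u\in C_2}(-1)^{y_x\cdot u}|u+y_z+\sum_iv_iw_i\rangle$, $v\in\mathbb{F}_2^K$. The logical action of a unitary $U$ fixing the code is $\mathcal{E}^{-1}U\mathcal{E}$ on $(\mathbb{C}^2)^{\otimes K}$ where $\mathcal{E}:|v\rangle\mapsto|v\rangle_L$; it is transversal if it equals $\bigotimes_{i=1}^KE_i$ for unitary $E_i\in\mathbb{C}^{2\times2}$. *)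

theory Defs
  imports "HOL-Analysis.Analysis"
begin

section \<open>Binary vectors: elements of F_2^n as functions nat => bool supported below n\<close>

type_synonym bvec = "nat \<Rightarrow> bool"

definition bvecs :: "nat \<Rightarrow> bvec set" where
  "bvecs n = {x. \<forall>i\<ge>n. \<not> x i}"

definition bzero :: bvec where
  "bzero = (\<lambda>_. False)"

definition badd :: "bvec \<Rightarrow> bvec \<Rightarrow> bvec" where
  "badd x y = (\<lambda>i. x i \<noteq> y i)"

text \<open>Dot product of two binary vectors lifted to {0,1}^n (an integer; only its parity
  or its value mod N matters where it is used).\<close>
definition bdot :: "nat \<Rightarrow> bvec \<Rightarrow> bvec \<Rightarrow> nat" where
  "bdot n x y = card {i. i < n \<and> x i \<and> y i}"

text \<open>Dot product b . x = sum_i b_i x_i for b in Z_N^n (represented by integers) and x lifted to {0,1}^n.\<close>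
definition zdot :: "nat \<Rightarrow> (nat \<Rightarrow> int) \<Rightarrow> bvec \<Rightarrow> int" where
  "zdot n b x = (\<Sum>i<n. b i * of_bool (x i))"

definition lin_code :: "nat \<Rightarrow> bvec set \<Rightarrow> bool" where
  "lin_code n C \<longleftrightarrow> C \<subseteq> bvecs n \<and> bzero \<in> C \<and> (\<forall>x\<in>C. \<forall>y\<in>C. badd x y \<in> C)"

definition code_dual :: "nat \<Rightarrow> bvec set \<Rightarrow> bvec set" where
  "code_dual n C = {v \<in> bvecs n. \<forall>u\<in>C. even (bdot n u v)}"

text \<open>F_2-linear combination sum_{i<K} v_i w_i.\<close>
definition lincomb :: "nat \<Rightarrow> (nat \<Rightarrow> bvec) \<Rightarrow> bvec \<Rightarrow> bvec" where
  "lincomb K w v = (\<lambda>j. odd (card {i. i < K \<and> v i \<and> w i j}))"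

section \<open>States of (C^2)^{\<otimes> n}: complex amplitude functions on {0,1}^n\<close>

definition qstates :: "nat \<Rightarrow> (bvec \<Rightarrow> complex) set" where
  "qstates n = {\<psi>. \<forall>x. x \<notin> bvecs n \<longrightarrow> \<psi> x = 0}"

definition omega_pow :: "nat \<Rightarrow> int \<Rightarrow> complex" where
  "omega_pow N a = cis (2 * pi * of_int a / of_nat N)"

text \<open>U(b) = tensor of diag(1, omega^{b_i}); acts by |x> |-> omega^{b.x} |x>.\<close>
definition Uop :: "nat \<Rightarrow> nat \<Rightarrow> (nat \<Rightarrow> int) \<Rightarrow> (bvec \<Rightarrow> complex) \<Rightarrow> (bvec \<Rightarrow> complex)" where
  "Uop N n b \<psi> = (\<lambda>x. omega_pow N (zdot n b x) * \<psi> x)"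

text \<open>X(u) Z(v): since Z(v)|x> = (-1)^{v.x}|x> and X(u)|x> = |x+u>,
  (X(u)Z(v) psi)(x) = (-1)^{v.(x+u)} psi(x+u).\<close>
definition XZop :: "nat \<Rightarrow> bvec \<Rightarrow> bvec \<Rightarrow> (bvec \<Rightarrow> complex) \<Rightarrow> (bvec \<Rightarrow> complex)" where
  "XZop n u v \<psi> = (\<lambda>x. (-1) ^ bdot n v (badd x u) * \<psi> (badd x u))"

definition css_code :: "nat \<Rightarrow> bvec set \<Rightarrow> bvec set \<Rightarrow> bvec \<Rightarrow> bvec \<Rightarrow> (bvec \<Rightarrow> complex) set" where
  "css_code n C1 C2 yx yz =
     {\<psi> \<in> qstates n. \<forall>u\<in>C2. \<forall>v\<in>code_dual n C1.
        (\<lambda>x. (-1) ^ (bdot n yx u + bdot n yz v) * XZop n u v \<psi> x) = \<psi>}"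

text \<open>An encoding: w_1..w_K (indexed 0..K-1) in C1 whose classes form a basis of C1/C2.\<close>
definition is_encoding :: "nat \<Rightarrow> bvec set \<Rightarrow> bvec set \<Rightarrow> nat \<Rightarrow> (nat \<Rightarrow> bvec) \<Rightarrow> bool" where
  "is_encoding n C1 C2 K w \<longleftrightarrow>
     (\<forall>i<K. w i \<in> C1) \<and>
     (\<forall>c\<in>C1. \<exists>v\<in>bvecs K. badd c (lincomb K w v) \<in> C2) \<and>
     (\<forall>v\<in>bvecs K. lincomb K w v \<in> C2 \<longrightarrow> v = bzero)"

definition log_state :: "nat \<Rightarrow> bvec set \<Rightarrow> bvec \<Rightarrow> bvec \<Rightarrow> nat \<Rightarrow> (nat \<Rightarrow> bvec) \<Rightarrow> bvec \<Rightarrow> (bvec \<Rightarrow> complex)" where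
  "log_state n C2 yx yz K w v =
     (\<lambda>x. complex_of_real (1 / sqrt (real (card C2))) *
          (\<Sum>u\<in>C2. if x = badd (badd u yz) (lincomb K w v) then (-1) ^ bdot n yx u else 0))"

definition encoder :: "nat \<Rightarrow> bvec set \<Rightarrow> bvec \<Rightarrow> bvec \<Rightarrow> nat \<Rightarrow> (nat \<Rightarrow> bvec) \<Rightarrow> (bvec \<Rightarrow> complex) \<Rightarrow> (bvec \<Rightarrow> complex)" where
  "encoder n C2 yx yz K w \<phi> = (\<lambda>x. \<Sum>v\<in>bvecs K. \<phi> v * log_state n C2 yx yz K w v x)"

definition logical_action :: "nat \<Rightarrow> bvec set \<Rightarrow> bvec \<Rightarrow> bvec \<Rightarrow> nat \<Rightarrow> (nat \<Rightarrow> bvec)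
     \<Rightarrow> ((bvec \<Rightarrow> complex) \<Rightarrow> (bvec \<Rightarrow> complex)) \<Rightarrow> (bvec \<Rightarrow> complex) \<Rightarrow> (bvec \<Rightarrow> complex)" where
  "logical_action n C2 yx yz K w U \<phi> =
     inv_into (qstates K) (encoder n C2 yx yz K w) (U (encoder n C2 yx yz K w \<phi>))"

text \<open>2x2 complex matrices indexed by bool (False ~ 0, True ~ 1), entry M row col.\<close>
definition unitary2 :: "(bool \<Rightarrow> bool \<Rightarrow> complex) \<Rightarrow> bool" where
  "unitary2 M \<longleftrightarrow> (\<forall>j k. (\<Sum>i\<in>UNIV. cnj (M i j) * M i k) = (if j = k then 1 else 0))"

text \<open>Action of E_1 \<otimes> ... \<otimes> E_K on (C^2)^{\<otimes> K}.\<close>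
definition tensor_op :: "nat \<Rightarrow> (nat \<Rightarrow> bool \<Rightarrow> bool \<Rightarrow> complex) \<Rightarrow> (bvec \<Rightarrow> complex) \<Rightarrow> (bvec \<Rightarrow> complex)" where
  "tensor_op K E \<phi> =
     (\<lambda>v. if v \<in> bvecs K then (\<Sum>u\<in>bvecs K. (\<Prod>i<K. E i (v i) (u i)) * \<phi> u) else 0)"

definition transversal :: "nat \<Rightarrow> ((bvec \<Rightarrow> complex) \<Rightarrow> (bvec \<Rightarrow> complex)) \<Rightarrow> bool" where
  "transversal K L \<longleftrightarrow>
     (\<exists>E. (\<forall>i<K. unitary2 (E i)) \<and> (\<forall>\<phi>\<in>qstates K. L \<phi> = tensor_op K E \<phi>))"

definition bflip :: "nat \<Rightarrow> (nat \<Rightarrow> int) \<Rightarrow> bvec \<Rightarrow> (nat \<Rightarrow> int)" where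
  "bflip N b yz = (\<lambda>i. if yz i then (- b i) mod int N else b i)"

definition Uprime :: "nat \<Rightarrow> nat \<Rightarrow> (nat \<Rightarrow> int) \<Rightarrow> bvec \<Rightarrow> (bvec \<Rightarrow> complex) \<Rightarrow> (bvec \<Rightarrow> complex)" where
  "Uprime N n b yz \<psi> = (\<lambda>x. omega_pow N (zdot n b yz) * Uop N n (bflip N b yz) \<psi> x)"

end

theory Submission
  imports Defs
begin

(* The logical state |v>_L of Q is supported on the coset y_z + w(v) + C_2, that of Q' on
   w(v) + C_2. As U(b) is diagonal and maps Q into itself, the X-type stabilizers force its phase
   omega^(b.x) to be constant on each coset y_z + w(v) + C_2, say lambda_v, so U(b) acts
   logically as diag(lambda_v). Coordinatewise y_z.b + b_{y_z}.x = b.(x + y_z) mod N, so U'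
   multiplies |x> by omega^(b.(x + y_z)), which on w(v) + C_2 is again lambda_v: both logical
   actions are diag(lambda_v). For (3), the Z-type stabilizers confine Q' to
   (C_1^perp)^perp = C_1, the union of the cosets w(v) + C_2, on which U' acts by lambda_v = 1. *)

section \<open>Binary vectors and linear codes\<close>

lemma even_card_sym_diff_iff:
  assumes "finite A" "finite B"
  shows "even (card (sym_diff A B)) \<longleftrightarrow> (even (card A) \<longleftrightarrow> even (card B))"
proof -
  have "card (sym_diff A B) = card (A - B) + card (B - A)"
    by (rule card_Un_disjoint) (use assms in auto)
  moreover have "card A = card (A \<inter> B) + card (A - B)" "card B = card (A \<inter> B) + card (B - A)"
    using assms card_Int_Diff[of A B] card_Int_Diff[of B A] by (simp_all add: Int_commute)
  ultimately show ?thesis by auto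
qed

lemma badd_bzero [simp]: "badd x bzero = x" "badd bzero x = x"
  by (simp_all add: badd_def bzero_def)

lemma badd_self [simp]: "badd x x = bzero"
  by (simp add: badd_def bzero_def)

lemma badd_assoc: "badd (badd x y) z = badd x (badd y z)"
  by (auto simp: badd_def)

lemma badd_right_cancel [simp]: "badd x z = badd y z \<longleftrightarrow> x = y"
  by (auto simp: badd_def fun_eq_iff)

lemma bzero_in_bvecs [simp]: "bzero \<in> bvecs n"
  by (simp add: bvecs_def bzero_def)

lemma badd_in_bvecs: "x \<in> bvecs n \<Longrightarrow> y \<in> bvecs n \<Longrightarrow> badd x y \<in> bvecs n"
  by (auto simp: bvecs_def badd_def)

lemma bvecs_SucD:
  assumes "x \<in> bvecs (Suc m)" "\<not> x m"
  shows "x \<in> bvecs m"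
  unfolding bvecs_def
proof (intro CollectI allI impI)
  fix i assume "m \<le> i"
  then have "i = m \<or> Suc m \<le> i" by linarith
  then show "\<not> x i" using assms by (auto simp: bvecs_def)
qed

lemma finite_bvecs: "finite (bvecs n)"
proof (rule finite_subset)
  show "bvecs n \<subseteq> (\<lambda>S i. i \<in> S) ` Pow {..<n}"
  proof
    fix x assume "x \<in> bvecs n"
    then have "{i. x i} \<in> Pow {..<n}" by (auto simp: bvecs_def) (meson not_le)
    then show "x \<in> (\<lambda>S i. i \<in> S) ` Pow {..<n}" by (rule rev_image_eqI) simp
  qed
qed simp

lemma bdot_commute: "bdot n x y = bdot n y x"
  unfolding bdot_def by (metis (no_types, lifting) Collect_cong)

lemma bdot_bzero [simp]: "bdot n x bzero = 0" "bdot n bzero x = 0"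
  by (simp_all add: bdot_def bzero_def)

lemma even_bdot_badd_right:
  "even (bdot n a (badd x y)) \<longleftrightarrow> (even (bdot n a x) \<longleftrightarrow> even (bdot n a y))"
proof -
  let ?A = "{i. i < n \<and> a i \<and> x i}" and ?B = "{i. i < n \<and> a i \<and> y i}"
  have "{i. i < n \<and> a i \<and> badd x y i} = sym_diff ?A ?B"
    by (auto simp: badd_def)
  then show ?thesis unfolding bdot_def using even_card_sym_diff_iff[of ?A ?B] by simp
qed

lemma even_bdot_badd_left:
  "even (bdot n (badd x y) a) \<longleftrightarrow> (even (bdot n x a) \<longleftrightarrow> even (bdot n y a))"
  using even_bdot_badd_right by (metis bdot_commute)

lemma lin_codeD:
  assumes "lin_code n C"
  shows "C \<subseteq> bvecs n" "bzero \<in> C" "x \<in> C \<Longrightarrow> y \<in> C \<Longrightarrow> badd x y \<in> C"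
  using assms by (auto simp: lin_code_def)

lemma finite_lin_code: "lin_code n C \<Longrightarrow> finite C"
  using finite_bvecs finite_subset lin_codeD(1) by blast

lemma lincomb_badd: "lincomb K w (badd v v') = badd (lincomb K w v) (lincomb K w v')"
proof -
  have "odd (card {i. i < K \<and> badd v v' i \<and> w i j})
        \<longleftrightarrow> (odd (card {i. i < K \<and> v i \<and> w i j}) \<noteq> odd (card {i. i < K \<and> v' i \<and> w i j}))" for j
  proof -
    let ?A = "{i. i < K \<and> v i \<and> w i j}" and ?B = "{i. i < K \<and> v' i \<and> w i j}"
    have "{i. i < K \<and> badd v v' i \<and> w i j} = sym_diff ?A ?B"
      by (auto simp: badd_def)
    then show ?thesis using even_card_sym_diff_iff[of ?A ?B] by simp
  qed
  then show ?thesis unfolding lincomb_def badd_def by auto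
qed

lemma lincomb_Suc: "lincomb (Suc K) w v = badd (lincomb K w v) (if v K then w K else bzero)"
proof -
  have "odd (card {i. i < Suc K \<and> v i \<and> w i j})
        \<longleftrightarrow> (odd (card {i. i < K \<and> v i \<and> w i j}) \<noteq> (v K \<and> w K j))" for j
  proof (cases "v K \<and> w K j")
    case True
    then have "{i. i < Suc K \<and> v i \<and> w i j} = insert K {i. i < K \<and> v i \<and> w i j}"
      by (auto simp: less_Suc_eq)
    then show ?thesis using True by simp
  next
    case False
    then have "{i. i < Suc K \<and> v i \<and> w i j} = {i. i < K \<and> v i \<and> w i j}"
      by (auto simp: less_Suc_eq)
    then show ?thesis using False by simp
  qed
  then show ?thesis by (simp add: lincomb_def badd_def bzero_def fun_eq_iff)
qed

lemma lincomb_in_lin_code: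
  assumes "lin_code n C" "\<forall>i<K. w i \<in> C"
  shows "lincomb K w v \<in> C"
  using assms(2)
proof (induction K)
  case 0
  have "lincomb 0 w v = bzero" by (simp add: lincomb_def bzero_def)
  then show ?case using lin_codeD(2)[OF assms(1)] by simp
next
  case (Suc K)
  then have "lincomb K w v \<in> C" "(if v K then w K else bzero) \<in> C"
    using lin_codeD(2)[OF assms(1)] by auto
  then show ?case unfolding lincomb_Suc by (rule lin_codeD(3)[OF assms(1)])
qed

section \<open>The double dual of a binary linear code\<close>

definition unitv :: "nat \<Rightarrow> bvec" where
  "unitv m = (\<lambda>i. i = m)"

lemma unitv_in_bvecs: "unitv m \<in> bvecs (Suc m)"
  by (simp add: bvecs_def unitv_def)

lemma bdot_unitv: "m < M \<Longrightarrow> bdot M c (unitv m) = of_bool (c m)"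
proof -
  assume "m < M"
  then have "{i. i < M \<and> c i \<and> unitv m i} = (if c m then {m} else {})"
    by (auto simp: unitv_def)
  then show ?thesis by (simp add: bdot_def)
qed

lemma lin_code_shorten:
  assumes "lin_code (Suc m) C"
  shows "lin_code m {c \<in> C. \<not> c m}"
  unfolding lin_code_def
proof (intro conjI ballI)
  show "{c \<in> C. \<not> c m} \<subseteq> bvecs m"
    using lin_codeD(1)[OF assms] bvecs_SucD by blast
  show "bzero \<in> {c \<in> C. \<not> c m}"
    using lin_codeD(2)[OF assms] by (simp add: bzero_def)
  fix x y assume "x \<in> {c \<in> C. \<not> c m}" "y \<in> {c \<in> C. \<not> c m}"
  moreover from this have "badd x y \<in> C" using lin_codeD(3)[OF assms] by blast
  ultimately show "badd x y \<in> {c \<in> C. \<not> c m}" by (simp add: badd_def)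
qed

lemma coset_rep_without_coord:
  assumes C: "lin_code (Suc m) C" and c0: "c0 \<in> C" "c0 m"
    and x: "x \<in> bvecs (Suc m)" "x \<notin> C"
  obtains x' where "x' \<in> bvecs m" "x' \<notin> C" "\<not> x' m" "x = x' \<or> x = badd x' c0"
proof -
  define x' where "x' = (if x m then badd x c0 else x)"
  have "x' \<in> bvecs (Suc m)"
    using x(1) lin_codeD(1)[OF C] c0(1) by (auto simp: x'_def intro: badd_in_bvecs)
  moreover have "\<not> x' m" using c0(2) by (simp add: x'_def badd_def)
  ultimately have "x' \<in> bvecs m" by (rule bvecs_SucD)
  moreover have "x = x' \<or> x = badd x' c0" by (simp add: x'_def badd_assoc)
  moreover from this have "x' \<notin> C" using x(2) lin_codeD(3)[OF C _ c0(1)] by blast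
  ultimately show ?thesis using that \<open>\<not> x' m\<close> by blast
qed

lemma odd_dual_witness_Suc:
  assumes C: "lin_code (Suc m) C" and c0: "c0 \<in> C" "c0 m" and "m < M"
    and v': "v' \<in> bvecs m" "\<forall>c\<in>C. \<not> c m \<longrightarrow> even (bdot M c v')"
    and x': "odd (bdot M x' v')" "\<not> x' m" "x = x' \<or> x = badd x' c0"
  shows "\<exists>v\<in>bvecs (Suc m). (\<forall>c\<in>C. even (bdot M c v)) \<and> odd (bdot M x v)"
proof -
  define v where "v = (if even (bdot M c0 v') then v' else badd v' (unitv m))"
  have parity: "even (bdot M y v) \<longleftrightarrow> (even (bdot M y v') \<longleftrightarrow> even (bdot M c0 v') \<or> \<not> y m)" for y
    using \<open>m < M\<close> by (auto simp: v_def even_bdot_badd_right bdot_unitv)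
  have "v \<in> bvecs (Suc m)"
    using v'(1) unitv_in_bvecs by (auto simp: v_def bvecs_def badd_def)
  moreover have even: "\<forall>c\<in>C. even (bdot M c v)"
  proof
    fix c assume "c \<in> C"
    show "even (bdot M c v)"
    proof (cases "c m")
      case True
      have "badd c c0 \<in> C" "\<not> badd c c0 m"
        using lin_codeD(3)[OF C \<open>c \<in> C\<close> c0(1)] c0(2) True by (auto simp: badd_def)
      then have "even (bdot M (badd c c0) v')" using v'(2) by blast
      then show ?thesis using parity[of c] True by (simp add: even_bdot_badd_left)
    next
      case False
      then show ?thesis using parity[of c] v'(2) \<open>c \<in> C\<close> by auto
    qed
  qed
  moreover have "odd (bdot M x' v)" using parity[of x'] x'(1,2) by simp
  then have "odd (bdot M x v)"
    using x'(3) even c0(1) by (auto simp: even_bdot_badd_left)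
  ultimately show ?thesis by blast
qed

lemma odd_dual_witness:
  assumes "lin_code m C" "x \<in> bvecs m" "x \<notin> C" "m \<le> M"
  shows "\<exists>v\<in>bvecs m. (\<forall>c\<in>C. even (bdot M c v)) \<and> odd (bdot M x v)"
  using assms
proof (induction m arbitrary: C x)
  case 0
  then have "x = bzero" by (auto simp: bvecs_def bzero_def)
  then show ?case using 0 lin_codeD(2) by blast
next
  case (Suc m C x)
  define C' where "C' = {c \<in> C. \<not> c m}"
  have C': "lin_code m C'" unfolding C'_def using Suc.prems(1) by (rule lin_code_shorten)
  have "m < M" using Suc.prems(4) by simp
  show ?case
  proof (cases "\<exists>c0\<in>C. c0 m")
    case True
    then obtain c0 where c0: "c0 \<in> C" "c0 m" by blast
    obtain x' where x': "x' \<in> bvecs m" "x' \<notin> C" "\<not> x' m" "x = x' \<or> x = badd x' c0"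
      using coset_rep_without_coord[OF Suc.prems(1) c0 Suc.prems(2,3)] by blast
    then obtain v' where "v' \<in> bvecs m" "\<forall>c\<in>C'. even (bdot M c v')" "odd (bdot M x' v')"
      using Suc.IH[OF C'] Suc.prems(4) by (auto simp: C'_def)
    then show ?thesis
      using odd_dual_witness_Suc[OF Suc.prems(1) c0 \<open>m < M\<close>] x'(3,4) by (auto simp: C'_def)
  next
    case False
    then have "C' = C" by (auto simp: C'_def)
    show ?thesis
    proof (cases "x m")
      case True
      then show ?thesis
        using False unitv_in_bvecs bdot_unitv[OF \<open>m < M\<close>] by (intro bexI[of _ "unitv m"]) auto
    next
      case False
      have "x \<in> bvecs m" using Suc.prems(2) False by (rule bvecs_SucD)
      moreover have "bvecs m \<subseteq> bvecs (Suc m)" by (auto simp: bvecs_def)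
      ultimately show ?thesis
        using Suc.IH[OF C'] Suc.prems(3,4) \<open>C' = C\<close> by (metis Suc_leD subsetD)
    qed
  qed
qed

lemma code_dual_dual:
  assumes "lin_code n C"
  shows "code_dual n (code_dual n C) = C"
proof
  show "C \<subseteq> code_dual n (code_dual n C)"
    using lin_codeD(1)[OF assms] by (auto simp: code_dual_def bdot_commute)
  show "code_dual n (code_dual n C) \<subseteq> C"
  proof
    fix x assume x: "x \<in> code_dual n (code_dual n C)"
    show "x \<in> C"
    proof (rule ccontr)
      assume "x \<notin> C"
      then obtain v where "v \<in> code_dual n C" "odd (bdot n v x)"
        using odd_dual_witness[OF assms, of x n] x by (auto simp: code_dual_def bdot_commute)
      then show False using x by (auto simp: code_dual_def)
    qed
  qed
qed

section \<open>Diagonal phase operators\<close>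

lemma omega_pow_add: "omega_pow N a * omega_pow N b = omega_pow N (a + b)"
  unfolding omega_pow_def cis_mult by (simp add: add_divide_distrib distrib_left)

lemma omega_pow_cong:
  assumes "N > 0" "a mod int N = b mod int N"
  shows "omega_pow N a = omega_pow N b"
proof -
  obtain k where "a = b + int N * k"
    using assms(2) mod_eq_dvd_iff[of a "int N" b] by (metis add_diff_cancel_left' diff_add_cancel dvdE)
  moreover have "omega_pow N (int N * k) = 1"
    using assms(1) cis_multiple_2pi[OF Ints_of_int[of k]] by (simp add: omega_pow_def mult_ac)
  ultimately show ?thesis by (simp flip: omega_pow_add)
qed

lemma zdot_bflip_mod:
  "(zdot n b yz + zdot n (bflip N b yz) x) mod int N = zdot n b (badd x yz) mod int N"
proof -
  have "(b i * of_bool (yz i) + bflip N b yz i * of_bool (x i)) mod int N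
      = (b i * of_bool (badd x yz i)) mod int N" for i
    by (cases "yz i"; cases "x i") (simp_all add: bflip_def badd_def mod_add_right_eq)
  then have "(\<Sum>i<n. b i * of_bool (yz i) + bflip N b yz i * of_bool (x i)) mod int N
      = (\<Sum>i<n. b i * of_bool (badd x yz i)) mod int N"
    by (subst (1 2) mod_sum_eq[symmetric]) simp
  then show ?thesis by (simp add: zdot_def sum.distrib)
qed

definition diag_op :: "(bvec \<Rightarrow> complex) \<Rightarrow> (bvec \<Rightarrow> complex) \<Rightarrow> (bvec \<Rightarrow> complex)" where
  "diag_op f \<psi> = (\<lambda>x. f x * \<psi> x)"

lemma Uop_eq_diag_op: "Uop N n b = diag_op (\<lambda>x. omega_pow N (zdot n b x))"
  by (simp add: Uop_def diag_op_def fun_eq_iff)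

lemma Uprime_eq_diag_op:
  assumes "N > 0"
  shows "Uprime N n b yz = diag_op (\<lambda>x. omega_pow N (zdot n b (badd x yz)))"
proof -
  have "omega_pow N (zdot n b yz) * omega_pow N (zdot n (bflip N b yz) x)
      = omega_pow N (zdot n b (badd x yz))" for x
    unfolding omega_pow_add using assms zdot_bflip_mod by (rule omega_pow_cong)
  then show ?thesis by (simp add: Uprime_def Uop_def diag_op_def fun_eq_iff mult.assoc)
qed

lemma minus_one_power_parity: "even k \<longleftrightarrow> even m \<Longrightarrow> (- 1 :: 'a :: ring_1) ^ k = (- 1) ^ m"
  by (simp add: minus_one_power_iff)

lemma minus_one_power_mult_self: "(- 1 :: 'a :: ring_1) ^ k * (- 1) ^ k = 1"
  by (simp add: minus_one_power_iff)

section \<open>Logical states of a CSS code\<close>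

locale css_encoding =
  fixes n K :: nat and C1 C2 :: "bvec set" and w :: "nat \<Rightarrow> bvec"
  assumes lin_C1: "lin_code n C1" and lin_C2: "lin_code n C2" and C2_subset_C1: "C2 \<subseteq> C1"
    and encoding: "is_encoding n C1 C2 K w"
begin

definition log_amplitude :: complex where
  "log_amplitude = complex_of_real (1 / sqrt (real (card C2)))"

definition log_support :: "bvec \<Rightarrow> bvec \<Rightarrow> bvec set" where
  "log_support yz v = (\<lambda>u. badd (badd u yz) (lincomb K w v)) ` C2"

lemma log_amplitude_nonzero: "log_amplitude \<noteq> 0"
  using finite_lin_code[OF lin_C2] lin_codeD(2)[OF lin_C2] card_gt_0_iff
  unfolding log_amplitude_def by fastforce

lemma lincomb_in_C1: "lincomb K w v \<in> C1"
  using lincomb_in_lin_code[OF lin_C1] encoding by (simp add: is_encoding_def)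

lemma log_state_on_support:
  "u \<in> C2 \<Longrightarrow> log_state n C2 yx yz K w v (badd (badd u yz) (lincomb K w v))
     = log_amplitude * (-1) ^ bdot n yx u"
  unfolding log_state_def log_amplitude_def by (simp add: finite_lin_code[OF lin_C2])

lemma log_state_representative: "log_state n C2 yx yz K w v (badd yz (lincomb K w v)) = log_amplitude"
  using log_state_on_support[OF lin_codeD(2)[OF lin_C2]] by simp

lemma log_state_off_support: "x \<notin> log_support yz v \<Longrightarrow> log_state n C2 yx yz K w v x = 0"
  unfolding log_state_def log_support_def by (auto intro!: sum.neutral)

lemma log_support_badd_C2:
  assumes "u0 \<in> C2"
  shows "badd x u0 \<in> log_support yz v \<longleftrightarrow> x \<in> log_support yz v"
proof -
  have shift: "badd x u0 \<in> log_support yz v" if x: "x \<in> log_support yz v" for x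
  proof -
    obtain u where "u \<in> C2" "x = badd (badd u yz) (lincomb K w v)"
      using x unfolding log_support_def by blast
    moreover from this have "badd u u0 \<in> C2" using lin_codeD(3)[OF lin_C2] assms by blast
    ultimately show ?thesis unfolding log_support_def
      by (intro image_eqI[of _ _ "badd u u0"]) (auto simp: badd_def)
  qed
  show ?thesis using shift[of "badd x u0"] shift[of x] by (auto simp: badd_assoc)
qed

lemma log_support_shift: "badd x yz \<in> log_support yz v \<longleftrightarrow> x \<in> log_support bzero v"
proof -
  have "badd (badd u yz) (lincomb K w v) = badd (badd u (lincomb K w v)) yz" for u
    by (rule ext) (auto simp: badd_def)
  then show ?thesis unfolding log_support_def image_iff by simp
qed

lemma log_support_unique:
  assumes "v \<in> bvecs K" "v' \<in> bvecs K" "badd yz (lincomb K w v) \<in> log_support yz v'"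
  shows "v = v'"
proof -
  obtain u where "u \<in> C2" "badd yz (lincomb K w v) = badd (badd u yz) (lincomb K w v')"
    using assms(3) unfolding log_support_def by blast
  moreover from this(2) have "u = lincomb K w (badd v v')"
    unfolding lincomb_badd by (intro ext) (auto simp: badd_def dest: fun_cong)
  ultimately have "badd v v' = bzero"
    using encoding badd_in_bvecs[OF assms(1,2)] by (auto simp: is_encoding_def)
  then show ?thesis by (auto simp: badd_def bzero_def fun_eq_iff)
qed

lemma C1_subset_log_supports: "x \<in> C1 \<Longrightarrow> \<exists>v\<in>bvecs K. x \<in> log_support bzero v"
proof -
  assume "x \<in> C1"
  then obtain v where "v \<in> bvecs K" "badd x (lincomb K w v) \<in> C2"
    using encoding by (auto simp: is_encoding_def)
  moreover have "x = badd (badd (badd x (lincomb K w v)) bzero) (lincomb K w v)"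
    by (simp add: badd_assoc)
  ultimately show ?thesis unfolding log_support_def by blast
qed

lemma encoder_at_representative:
  assumes "v \<in> bvecs K"
  shows "encoder n C2 yx yz K w \<phi> (badd yz (lincomb K w v)) = \<phi> v * log_amplitude"
proof -
  let ?x = "badd yz (lincomb K w v)"
  have "encoder n C2 yx yz K w \<phi> ?x
      = \<phi> v * log_state n C2 yx yz K w v ?x
        + (\<Sum>v'\<in>bvecs K - {v}. \<phi> v' * log_state n C2 yx yz K w v' ?x)"
    unfolding encoder_def using assms finite_bvecs by (simp add: sum.remove)
  also have "(\<Sum>v'\<in>bvecs K - {v}. \<phi> v' * log_state n C2 yx yz K w v' ?x) = 0"
  proof (rule sum.neutral, rule ballI)
    fix v' assume "v' \<in> bvecs K - {v}"
    then have "?x \<notin> log_support yz v'" using log_support_unique[OF assms] by blast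
    then show "\<phi> v' * log_state n C2 yx yz K w v' ?x = 0" by (simp add: log_state_off_support)
  qed
  finally show ?thesis by (simp add: log_state_representative)
qed

lemma inj_on_encoder: "inj_on (encoder n C2 yx yz K w) (qstates K)"
proof (rule inj_onI)
  fix \<phi>1 \<phi>2 assume "\<phi>1 \<in> qstates K" "\<phi>2 \<in> qstates K"
    and eq: "encoder n C2 yx yz K w \<phi>1 = encoder n C2 yx yz K w \<phi>2"
  show "\<phi>1 = \<phi>2"
  proof
    fix v show "\<phi>1 v = \<phi>2 v"
    proof (cases "v \<in> bvecs K")
      case True
      then have "\<phi>1 v * log_amplitude = \<phi>2 v * log_amplitude"
        using eq encoder_at_representative[OF True] by metis
      then show ?thesis using log_amplitude_nonzero by simp
    next
      case False
      then show ?thesis using \<open>\<phi>1 \<in> qstates K\<close> \<open>\<phi>2 \<in> qstates K\<close> by (simp add: qstates_def)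
    qed
  qed
qed

lemma logical_action_eqI:
  "\<psi> \<in> qstates K \<Longrightarrow> U (encoder n C2 yx yz K w \<phi>) = encoder n C2 yx yz K w \<psi>
   \<Longrightarrow> logical_action n C2 yx yz K w U \<phi> = \<psi>"
  unfolding logical_action_def using inj_on_encoder by (simp add: inv_into_f_f)


lemma log_support_subset_bvecs: "yz \<in> bvecs n \<Longrightarrow> log_support yz v \<subseteq> bvecs n"
  unfolding log_support_def
  using lin_codeD(1)[OF lin_C2] lin_codeD(1)[OF lin_C1] lincomb_in_C1 by (auto intro!: badd_in_bvecs)

lemma log_state_in_qstates:
  assumes "yz \<in> bvecs n"
  shows "log_state n C2 yx yz K w v \<in> qstates n"
  unfolding qstates_def using log_support_subset_bvecs[OF assms] log_state_off_support by blast

lemma css_sign_parity: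
  assumes "u \<in> C2" "u0 \<in> C2" "v0 \<in> code_dual n C1"
  shows "even (bdot n yx u0 + bdot n yz v0 + bdot n v0 (badd (badd (badd u u0) yz) (lincomb K w v))
               + bdot n yx (badd u u0)) \<longleftrightarrow> even (bdot n yx u)"
proof -
  let ?c = "badd (badd u u0) (lincomb K w v)"
  have "?c \<in> C1"
    using assms(1,2) C2_subset_C1 lincomb_in_C1 lin_codeD(3)[OF lin_C1] by blast
  then have "even (bdot n ?c v0)"
    using assms(3) by (simp add: code_dual_def)
  then have "even (bdot n v0 ?c)"
    by (metis bdot_commute)
  moreover have "badd (badd (badd u u0) yz) (lincomb K w v) = badd yz ?c"
    by (rule ext) (auto simp: badd_def)
  ultimately have "even (bdot n v0 (badd (badd (badd u u0) yz) (lincomb K w v))) \<longleftrightarrow> even (bdot n yz v0)"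
    by (simp add: even_bdot_badd_right bdot_commute)
  then show ?thesis by (auto simp: even_bdot_badd_right)
qed

lemma log_state_stabilized:
  assumes "u0 \<in> C2" "v0 \<in> code_dual n C1"
  shows "(-1) ^ (bdot n yx u0 + bdot n yz v0) * XZop n u0 v0 (log_state n C2 yx yz K w v) x
       = log_state n C2 yx yz K w v x"
proof (cases "x \<in> log_support yz v")
  case True
  then obtain u where u: "u \<in> C2" "x = badd (badd u yz) (lincomb K w v)"
    unfolding log_support_def by blast
  let ?x' = "badd (badd (badd u u0) yz) (lincomb K w v)"
  have "badd u u0 \<in> C2" using u(1) assms(1) lin_codeD(3)[OF lin_C2] by blast
  moreover have "badd x u0 = ?x'"
    unfolding u(2) by (rule ext) (auto simp: badd_def)
  ultimately have "XZop n u0 v0 (log_state n C2 yx yz K w v) x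
      = (-1) ^ bdot n v0 ?x' * (log_amplitude * (-1) ^ bdot n yx (badd u u0))"
    by (simp add: XZop_def log_state_on_support)
  then have "(-1) ^ (bdot n yx u0 + bdot n yz v0) * XZop n u0 v0 (log_state n C2 yx yz K w v) x
      = log_amplitude * (-1) ^ (bdot n yx u0 + bdot n yz v0 + bdot n v0 ?x' + bdot n yx (badd u u0))"
    by (simp add: power_add mult_ac)
  also have "\<dots> = log_amplitude * (-1) ^ bdot n yx u"
    using minus_one_power_parity[OF css_sign_parity[OF u(1) assms, of yx yz v], where 'a = complex]
    by simp
  finally show ?thesis using log_state_on_support[OF u(1)] u(2) by simp
next
  case False
  then have "badd x u0 \<notin> log_support yz v" using log_support_badd_C2[OF assms(1)] by blast
  then show ?thesis using False by (simp add: XZop_def log_state_off_support)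
qed

lemma log_state_in_css_code: "yz \<in> bvecs n \<Longrightarrow> log_state n C2 yx yz K w v \<in> css_code n C1 C2 yx yz"
  using log_state_in_qstates log_state_stabilized by (simp add: css_code_def)

lemma css_code_X_invariant:
  assumes "\<psi> \<in> css_code n C1 C2 yx yz" "u \<in> C2"
  shows "\<psi> x = (-1) ^ bdot n yx u * \<psi> (badd x u)"
proof -
  have "bzero \<in> code_dual n C1" by (simp add: code_dual_def)
  then have "(\<lambda>x. (-1) ^ (bdot n yx u + bdot n yz bzero) * XZop n u bzero \<psi> x) = \<psi>"
    using assms unfolding css_code_def by blast
  from fun_cong[OF this, of x] show ?thesis by (simp add: XZop_def)
qed

lemma css_code_support_C1:
  assumes "\<psi> \<in> css_code n C1 C2 yx bzero" "\<psi> x \<noteq> 0"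
  shows "x \<in> C1"
proof -
  have "even (bdot n v x)" if v: "v \<in> code_dual n C1" for v
  proof (rule ccontr)
    assume odd: "odd (bdot n v x)"
    have "(\<lambda>x. (-1) ^ (bdot n yx bzero + bdot n bzero v) * XZop n bzero v \<psi> x) = \<psi>"
      using assms(1) lin_codeD(2)[OF lin_C2] v unfolding css_code_def by blast
    from fun_cong[OF this, of x] have "(-1) ^ bdot n v x * \<psi> x = \<psi> x"
      by (simp add: XZop_def)
    then have "- \<psi> x = \<psi> x" using odd by simp
    then show False using assms(2) by simp
  qed
  moreover have "x \<in> bvecs n"
    using assms by (auto simp: css_code_def qstates_def)
  ultimately have "x \<in> code_dual n (code_dual n C1)"
    by (simp add: code_dual_def)
  then show ?thesis by (simp add: code_dual_dual[OF lin_C1])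
qed

lemma logical_action_diag_op:
  assumes eigval: "\<And>v x. v \<in> bvecs K \<Longrightarrow> x \<in> log_support yz v \<Longrightarrow> f x = eigval v"
    and "\<phi> \<in> qstates K"
  shows "logical_action n C2 yx yz K w (diag_op f) \<phi> = (\<lambda>v. if v \<in> bvecs K then eigval v * \<phi> v else 0)"
    (is "_ = ?\<psi>")
proof (rule logical_action_eqI)
  show "?\<psi> \<in> qstates K" by (simp add: qstates_def)
  show "diag_op f (encoder n C2 yx yz K w \<phi>) = encoder n C2 yx yz K w ?\<psi>"
  proof
    fix x
    have "f x * log_state n C2 yx yz K w v x = eigval v * log_state n C2 yx yz K w v x"
      if "v \<in> bvecs K" for v
      using eigval[OF that] log_state_off_support by (cases "x \<in> log_support yz v") auto
    then have "\<phi> v * (f x * log_state n C2 yx yz K w v x) = ?\<psi> v * log_state n C2 yx yz K w v x"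
      if "v \<in> bvecs K" for v
      using that by simp
    then have "(\<Sum>v\<in>bvecs K. \<phi> v * (f x * log_state n C2 yx yz K w v x))
        = (\<Sum>v\<in>bvecs K. ?\<psi> v * log_state n C2 yx yz K w v x)"
      by (rule sum.cong[OF refl])
    then show "diag_op f (encoder n C2 yx yz K w \<phi>) x = encoder n C2 yx yz K w ?\<psi> x"
      by (simp add: diag_op_def encoder_def sum_distrib_left mult.left_commute)
  qed
qed

lemma diag_op_const_on_log_support:
  assumes "yz \<in> bvecs n" and invariant: "diag_op f ` css_code n C1 C2 yx yz \<subseteq> css_code n C1 C2 yx yz"
    and "x \<in> log_support yz v"
  shows "f x = f (badd yz (lincomb K w v))"
proof -
  let ?p = "log_state n C2 yx yz K w v" and ?x0 = "badd yz (lincomb K w v)"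
  obtain u where u: "u \<in> C2" "x = badd (badd u yz) (lincomb K w v)"
    using assms(3) unfolding log_support_def by blast
  then have "badd ?x0 u = x" by (intro ext) (auto simp: badd_def)
  have "diag_op f ?p \<in> css_code n C1 C2 yx yz"
    using invariant log_state_in_css_code[OF assms(1)] by blast
  \<comment> \<open>the X-stabilizer of u relates the amplitudes at x0 and x0 + u = x, and the signs cancel\<close>
  from css_code_X_invariant[OF this u(1), of ?x0]
  have "f ?x0 * log_amplitude = (-1) ^ bdot n yx u * (f x * (log_amplitude * (-1) ^ bdot n yx u))"
    using log_state_on_support[OF u(1)] u(2) \<open>badd ?x0 u = x\<close>
    by (simp add: diag_op_def log_state_representative)
  also have "\<dots> = f x * log_amplitude"
    by (metis minus_one_power_mult_self mult.left_commute mult.right_neutral)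
  finally show ?thesis using log_amplitude_nonzero by simp
qed

lemma diag_op_fixed_log_state:
  assumes "diag_op f (log_state n C2 yx yz K w v) = log_state n C2 yx yz K w v"
  shows "f (badd yz (lincomb K w v)) = 1"
  using fun_cong[OF assms, of "badd yz (lincomb K w v)"]
  by (simp add: diag_op_def log_state_representative log_amplitude_nonzero)

lemma diag_op_fixes_css_code:
  assumes "\<forall>x\<in>C1. f x = 1" "\<psi> \<in> css_code n C1 C2 yx bzero"
  shows "diag_op f \<psi> = \<psi>"
proof
  fix x
  show "diag_op f \<psi> x = \<psi> x"
    using assms css_code_support_C1[OF assms(2), of x] by (cases "\<psi> x = 0") (auto simp: diag_op_def)
qed

end

theorem corollary2p8:
  fixes l n K N :: nat and C1 C2 :: "bvec set" and yx yz :: bvec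
    and b :: "nat \<Rightarrow> int" and w :: "nat \<Rightarrow> bvec"
  assumes hl: "l \<ge> 1" and hN: "N = 2 ^ l"
    and hC1: "lin_code n C1" and hC2: "lin_code n C2" and hsub: "C2 \<subseteq> C1"
    and hyx: "yx \<in> bvecs n" and hyz: "yz \<in> bvecs n"
    and hb: "\<forall>i<n. 0 \<le> b i \<and> b i < int N"
    and hfix: "Uop N n b ` css_code n C1 C2 yx yz = css_code n C1 C2 yx yz"
    and henc: "is_encoding n C1 C2 K w"
  shows "(\<forall>\<phi>\<in>qstates K.
            logical_action n C2 yx yz K w (Uop N n b) \<phi>
          = logical_action n C2 bzero bzero K w (Uprime N n b yz) \<phi>)
       \<and> (transversal K (logical_action n C2 yx yz K w (Uop N n b))
            \<longrightarrow> transversal K (logical_action n C2 bzero bzero K w (Uprime N n b yz)))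
       \<and> ((\<forall>\<psi>\<in>css_code n C1 C2 yx yz. Uop N n b \<psi> = \<psi>)
            \<longrightarrow> (\<forall>\<psi>\<in>css_code n C1 C2 bzero bzero. Uprime N n b yz \<psi> = \<psi>))"
proof -
  interpret css_encoding n K C1 C2 w
    using hC1 hC2 hsub henc by unfold_locales
  have "N > 0" using hN by simp
  define eigval where "eigval v = omega_pow N (zdot n b (badd yz (lincomb K w v)))" for v
  have invariant:
    "diag_op (\<lambda>x. omega_pow N (zdot n b x)) ` css_code n C1 C2 yx yz \<subseteq> css_code n C1 C2 yx yz"
    using hfix by (simp add: Uop_eq_diag_op)
  have phase: "omega_pow N (zdot n b x) = eigval v" if "x \<in> log_support yz v" for x v
    using diag_op_const_on_log_support[OF hyz invariant that] by (simp add: eigval_def)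
  have phase': "omega_pow N (zdot n b (badd x yz)) = eigval v" if "x \<in> log_support bzero v" for x v
    using phase that log_support_shift by blast
  have action: "logical_action n C2 yx yz K w (Uop N n b) \<phi>
      = logical_action n C2 bzero bzero K w (Uprime N n b yz) \<phi>" if "\<phi> \<in> qstates K" for \<phi>
    using logical_action_diag_op[OF phase that] logical_action_diag_op[OF phase' that]
    by (simp add: Uop_eq_diag_op Uprime_eq_diag_op[OF \<open>N > 0\<close>])
  moreover have "(\<forall>\<psi>\<in>css_code n C1 C2 bzero bzero. Uprime N n b yz \<psi> = \<psi>)"
    if fixed: "\<forall>\<psi>\<in>css_code n C1 C2 yx yz. Uop N n b \<psi> = \<psi>"
  proof -
    have "eigval v = 1" for v
    proof -
      have "Uop N n b (log_state n C2 yx yz K w v) = log_state n C2 yx yz K w v"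
        using fixed log_state_in_css_code[OF hyz] by blast
      from diag_op_fixed_log_state[OF this[unfolded Uop_eq_diag_op]] show ?thesis
        by (simp add: eigval_def)
    qed
    then have "\<forall>x\<in>C1. omega_pow N (zdot n b (badd x yz)) = 1"
      using C1_subset_log_supports phase' by metis
    then show ?thesis
      using diag_op_fixes_css_code by (simp add: Uprime_eq_diag_op[OF \<open>N > 0\<close>])
  qed
  ultimately show ?thesis by (auto simp: transversal_def)
qed

end
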